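(* For every simple game $v$ on $n\ge 2$ players and every player $i$ that is not a dictator in $v$, we have $\mathrm{BZI}_i(v)\le\frac{2^{n-1}-1}{2^{n-1}+n-2}$.
   Context: A simple game on $N=\{1,\dots,n\}$ is a surjective, monotone map $v\colon 2^N\to\{0,1\}$ (monotone: $v(S)\le v(T)$ whenever $S\subseteq T$). Player $j$ is a null player if $v(S)=v(S\cup\{j\})$ for all $S\subseteq N\setminus\{j\}$; player $i$ is a dictator if $v(\{i\})=1$ and all other players are null players. Penrose–Banzhaf index: with $\psi_j(v)=\sum_{S\subseteq N\setminus\{j\}}(v(S\cup\{j\})-v(S))$, $\mathrm{BZI}_i(v)=\psi_i(v)/\sum_{j\in N}\psi_j(v)$. *)

theory Defs
  imports Complex_Main
begin

text \<open>Player set N = {1..n}; a game is a function on subsets of N (values outside Pow N irrelevant).\<close>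

definition simple_game :: "nat \<Rightarrow> (nat set \<Rightarrow> nat) \<Rightarrow> bool" where
  "simple_game n v \<longleftrightarrow>
     (\<forall>S. S \<subseteq> {1..n} \<longrightarrow> v S \<in> {0, 1}) \<and>
     (\<exists>S. S \<subseteq> {1..n} \<and> v S = 0) \<and>
     (\<exists>S. S \<subseteq> {1..n} \<and> v S = 1) \<and>
     (\<forall>S T. S \<subseteq> T \<longrightarrow> T \<subseteq> {1..n} \<longrightarrow> v S \<le> v T)"

definition null_player :: "nat \<Rightarrow> (nat set \<Rightarrow> nat) \<Rightarrow> nat \<Rightarrow> bool" where
  "null_player n v j \<longleftrightarrow> (\<forall>S. S \<subseteq> {1..n} - {j} \<longrightarrow> v S = v (S \<union> {j}))"

definition dictator :: "nat \<Rightarrow> (nat set \<Rightarrow> nat) \<Rightarrow> nat \<Rightarrow> bool" where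
  "dictator n v i \<longleftrightarrow> v {i} = 1 \<and> (\<forall>j \<in> {1..n} - {i}. null_player n v j)"

definition swing_count :: "nat \<Rightarrow> (nat set \<Rightarrow> nat) \<Rightarrow> nat \<Rightarrow> int" where
  "swing_count n v j = (\<Sum>S \<in> Pow ({1..n} - {j}). int (v (S \<union> {j})) - int (v S))"

definition BZI :: "nat \<Rightarrow> (nat set \<Rightarrow> nat) \<Rightarrow> nat \<Rightarrow> real" where
  "BZI n v i = real_of_int (swing_count n v i) / real_of_int (\<Sum>j \<in> {1..n}. swing_count n v j)"

end

theory Submission
  imports Defs "HOL-Number_Theory.Cong"
begin

text \<open>
  Let \<open>M\<close> be the players other than \<open>i\<close>, \<open>m = |M| = n - 1\<close>. Since \<open>i\<close> is not a dictator,
  some coalition \<open>S \<subseteq> M\<close> is not a swing for \<open>i\<close>, so \<open>\<psi>\<^sub>i \<le> 2\<^sup>m - 1\<close>. On the other hand,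
  walking from a losing coalition \<open>L\<close> to the winning \<open>L \<union> M\<close> along the \<open>m\<close> cyclic rotations
  of a fixed ordering of \<open>M\<close> meets \<open>m\<close> distinct swings of players in \<open>M\<close>, so
  \<open>\<Sum>\<^sub>j\<^sub>\<in>\<^sub>M \<psi>\<^sub>j \<ge> m\<close>. As \<open>a / (a + b)\<close> increases in \<open>a\<close> and decreases in \<open>b\<close>, the bound follows.
\<close>

definition swings :: "'a set \<Rightarrow> ('a set \<Rightarrow> nat) \<Rightarrow> 'a \<Rightarrow> 'a set set" where
  "swings N v j = {S. S \<subseteq> N - {j} \<and> v S = 0 \<and> v (insert j S) = 1}"

lemma swings_subset_Pow: "swings N v j \<subseteq> Pow (N - {j})"
  unfolding swings_def by auto

lemma exists_step_up:
  fixes P :: "nat \<Rightarrow> bool"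
  assumes "\<not> P 0" "P m"
  shows "\<exists>k<m. \<not> P k \<and> P (Suc k)"
  using assms(2)
proof (induction m)
  case 0
  with assms(1) show ?case by simp
next
  case (Suc m)
  then show ?case
    by (cases "P m") (auto intro: less_SucI)
qed

lemma card_pivots_ge:
  fixes W :: "'a set \<Rightarrow> bool"
  assumes fin: "finite M" and lose: "\<not> W {}" and win: "W M"
  shows "card M \<le> card {(j, T). j \<in> M \<and> T \<subseteq> M - {j} \<and> \<not> W T \<and> W (insert j T)}"
    (is "_ \<le> card ?pivots")
proof -
  define m where "m = card M"
  obtain h where h: "bij_betw h {..<m} M"
    using ex_bij_betw_nat_finite[OF fin] by (auto simp: m_def lessThan_atLeast0)
  have "M \<noteq> {}" using lose win by auto
  then have "m > 0" using fin by (simp add: m_def card_gt_0_iff)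
  define rot where "rot j l = h ((j + l) mod m)" for j l
  define chain where "chain j k = rot j ` {..<k}" for j k
  have shift_inj: "inj_on (\<lambda>l. (j + l) mod m) {..<m}" for j
    by (rule inj_onI) (simp add: cong_add_lcancel_nat[unfolded cong_def])
  have shift_onto: "(\<lambda>l. (j + l) mod m) ` {..<m} = {..<m}" for j
    using shift_inj \<open>m > 0\<close> by (intro endo_inj_surj) auto
  have rot_inj: "inj_on (rot j) {..<m}" for j
  proof -
    have "inj_on (h \<circ> (\<lambda>l. (j + l) mod m)) {..<m}"
      using shift_inj shift_onto h by (intro comp_inj_on) (simp_all add: bij_betw_def)
    then show ?thesis by (simp add: comp_def rot_def[abs_def])
  qed
  have rot_in: "rot j l \<in> M" for j l
    using h \<open>m > 0\<close> unfolding rot_def bij_betw_def by auto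
  have chain_sub: "chain j k \<subseteq> M" for j k
    using rot_in unfolding chain_def by auto
  have chain_full: "chain j m = M" for j
  proof -
    have "chain j m = h ` {..<m}"
      using shift_onto[of j]
      unfolding chain_def rot_def by (metis image_image)
    then show ?thesis using h by (simp add: bij_betw_def)
  qed
  have chain_Suc: "chain j (Suc k) = insert (rot j k) (chain j k)" for j k
    unfolding chain_def by (auto simp: lessThan_Suc)
  have chain_card: "card (chain j k) = k" if "k \<le> m" for j k
    unfolding chain_def using inj_on_subset[OF rot_inj] that
    by (simp add: card_image)
  have rot_notin: "rot j k \<notin> chain j k" if "k < m" for j k
    using rot_inj that unfolding chain_def inj_on_def by fastforce
  have "\<forall>j. \<exists>k<m. \<not> W (chain j k) \<and> W (chain j (Suc k))"
    using exists_step_up[of "\<lambda>k. W (chain _ k)"] lose win chain_full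
    by (simp add: chain_def)
  then obtain kf where kf: "\<And>j. kf j < m \<and> \<not> W (chain j (kf j)) \<and> W (chain j (Suc (kf j)))"
    by metis
  define g where "g j = (rot j (kf j), chain j (kf j))" for j
  have "g ` {..<m} \<subseteq> ?pivots"
    using kf chain_sub rot_in rot_notin chain_Suc by (auto simp: g_def)
  \<comment> \<open>The size of the coalition recovers the step \<open>kf j\<close>;
    the player added at that step then recovers the rotation \<open>j\<close>.\<close>
  moreover have "inj_on g {..<m}"
  proof (rule inj_onI)
    fix j j' assume j: "j \<in> {..<m}" and j': "j' \<in> {..<m}" and eq: "g j = g j'"
    then have "kf j = kf j'"
      using chain_card kf by (metis g_def less_imp_le prod.inject)
    then have "(j + kf j) mod m = (j' + kf j) mod m"
      using eq h \<open>m > 0\<close> unfolding g_def rot_def bij_betw_def inj_on_def by simp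
    then show "j = j'"
      using j j' by (simp add: cong_add_rcancel_nat[unfolded cong_def])
  qed
  moreover have "finite ?pivots"
    by (rule finite_subset[of _ "M \<times> Pow M"]) (use fin in auto)
  ultimately have "card (g ` {..<m}) \<le> card ?pivots"
    by (intro card_mono)
  with \<open>inj_on g {..<m}\<close> show ?thesis
    by (simp add: card_image m_def)
qed

lemma sum_card_swings_ge:
  fixes v :: "'a set \<Rightarrow> nat"
  assumes fin: "finite N"
    and binary: "\<And>S. S \<subseteq> N \<Longrightarrow> v S = 0 \<or> v S = 1"
    and disj: "L \<inter> M = {}" and sub: "L \<union> M \<subseteq> N"
    and lose: "v L = 0" and win: "v (L \<union> M) = 1"
  shows "card M \<le> (\<Sum>j\<in>M. card (swings N v j))"
proof -
  define W where "W T \<longleftrightarrow> v (L \<union> T) = 1" for T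
  let ?pivots = "{(j, T). j \<in> M \<and> T \<subseteq> M - {j} \<and> \<not> W T \<and> W (insert j T)}"
  define f where "f p = (fst p, L \<union> snd p)" for p :: "'a \<times> 'a set"
  have finM: "finite M" using fin sub finite_subset by auto
  have "\<not> W {}" "W M"
    using lose win by (simp_all add: W_def)
  then have "card M \<le> card ?pivots"
    by (rule card_pivots_ge[OF finM])
  also have "\<dots> = card (f ` ?pivots)"
  proof (intro card_image[symmetric] inj_onI)
    fix p q assume "p \<in> ?pivots" "q \<in> ?pivots" "f p = f q"
    with disj show "p = q"
      unfolding f_def by (clarsimp simp: prod_eq_iff) blast
  qed
  also have "\<dots> \<le> card (SIGMA j:M. swings N v j)"
  proof (rule card_mono)
    show "finite (SIGMA j:M. swings N v j)"
      using finM fin by (auto intro: finite_subset[OF swings_subset_Pow])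
    have "f (j, T) \<in> (SIGMA j:M. swings N v j)"
      if "j \<in> M" "T \<subseteq> M - {j}" "\<not> W T" "W (insert j T)" for j T
    proof -
      have "v (L \<union> T) = 0"
        using binary[of "L \<union> T"] that sub by (auto simp: W_def)
      with that disj sub show ?thesis
        by (auto simp: f_def swings_def W_def)
    qed
    then show "f ` ?pivots \<subseteq> (SIGMA j:M. swings N v j)"
      by (auto simp: image_subset_iff)
  qed
  also have "\<dots> = (\<Sum>j\<in>M. card (swings N v j))"
    using finM fin by (intro card_SigmaI) (auto intro: finite_subset[OF swings_subset_Pow])
  finally show ?thesis .
qed

lemma simple_game_values:
  "simple_game n v \<Longrightarrow> S \<subseteq> {1..n} \<Longrightarrow> v S = 0 \<or> v S = 1"
  unfolding simple_game_def by blast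

lemma simple_game_mono:
  "simple_game n v \<Longrightarrow> S \<subseteq> T \<Longrightarrow> T \<subseteq> {1..n} \<Longrightarrow> v S \<le> v T"
  unfolding simple_game_def by blast

lemma simple_game_grand_coalition:
  assumes "simple_game n v"
  shows "v {1..n} = 1"
proof -
  obtain S where "S \<subseteq> {1..n}" "v S = 1"
    using assms unfolding simple_game_def by blast
  then show ?thesis
    using simple_game_mono[OF assms, of S "{1..n}"] simple_game_values[OF assms, of "{1..n}"]
    by auto
qed

lemma simple_game_empty_coalition:
  assumes "simple_game n v"
  shows "v {} = 0"
proof -
  obtain S where "S \<subseteq> {1..n}" "v S = 0"
    using assms unfolding simple_game_def by blast
  then show ?thesis
    using simple_game_mono[OF assms, of "{}" S] by simp
qed

lemma swing_count_eq_card_swings: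
  assumes "simple_game n v" "j \<in> {1..n}"
  shows "swing_count n v j = int (card (swings {1..n} v j))"
proof -
  have "int (v (S \<union> {j})) - int (v S) = of_bool (S \<in> swings {1..n} v j)"
    if "S \<in> Pow ({1..n} - {j})" for S
  proof -
    have "S \<subseteq> {1..n}" "insert j S \<subseteq> {1..n}"
      using that assms(2) by auto
    moreover have "v S \<le> v (insert j S)"
      using simple_game_mono[OF assms(1) subset_insertI] \<open>insert j S \<subseteq> {1..n}\<close> .
    ultimately show ?thesis
      using assms simple_game_values[of n v S] simple_game_values[of n v "insert j S"]
        that
      by (auto simp: swings_def)
  qed
  then have "swing_count n v j = (\<Sum>S\<in>Pow ({1..n} - {j}). of_bool (S \<in> swings {1..n} v j))"
    unfolding swing_count_def by (intro sum.cong) auto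
  also have "\<dots> = int (card (swings {1..n} v j))"
    using swings_subset_Pow[of "{1..n}" v j] by (simp add: Int_absorb1)
  finally show ?thesis .
qed

lemma dictatorI_swings:
  assumes "swings {1..n} v i = Pow ({1..n} - {i})"
  shows "dictator n v i"
proof -
  have swing: "v S = 0" "v (insert i S) = 1" if "S \<subseteq> {1..n} - {i}" for S
    using that assms unfolding swings_def by blast+
  have "null_player n v j" if j: "j \<in> {1..n} - {i}" for j
    unfolding null_player_def
  proof safe
    fix S assume S: "S \<subseteq> {1..n} - {j}"
    show "v S = v (S \<union> {j})"
    proof (cases "i \<in> S")
      case True
      have "S = insert i (S - {i})" "S \<union> {j} = insert i (insert j (S - {i}))"
        using True by auto
      moreover have "v (insert i (S - {i})) = 1" "v (insert i (insert j (S - {i}))) = 1"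
        using S j by (intro swing(2); auto)+
      ultimately show ?thesis
        by argo
    next
      case False
      then have "S \<subseteq> {1..n} - {i}" "insert j S \<subseteq> {1..n} - {i}"
        using S j by auto
      then show ?thesis
        using swing(1) by simp
    qed
  qed
  with swing(2)[of "{}"] show ?thesis
    unfolding dictator_def by auto
qed

lemma card_swings_less_if_not_dictator:
  assumes "i \<in> {1..n}" "\<not> dictator n v i"
  shows "card (swings {1..n} v i) < 2 ^ (n - 1)"
proof -
  have "swings {1..n} v i \<noteq> Pow ({1..n} - {i})"
    using dictatorI_swings assms(2) by blast
  then have "swings {1..n} v i \<subset> Pow ({1..n} - {i})"
    by (simp add: psubset_eq swings_subset_Pow)
  then have "card (swings {1..n} v i) < card (Pow ({1..n} - {i}))"
    by (intro psubset_card_mono) auto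
  with assms(1) show ?thesis
    by (simp add: card_Pow)
qed

lemma losing_coalition_completed_by_others:
  assumes game: "simple_game n v" and i: "i \<in> {1..n}" and "\<not> dictator n v i"
  obtains L where "L \<subseteq> {i}" "v L = 0" "v (L \<union> ({1..n} - {i})) = 1"
proof -
  let ?M = "{1..n} - {i}"
  note binary = simple_game_values[OF game]
  consider "v ?M = 1" | "v ?M = 0" "v {i} = 0" | "v ?M = 0" "v {i} = 1"
    using binary[of ?M] binary[of "{i}"] i by auto
  then show ?thesis
  proof cases
    case 1
    with simple_game_empty_coalition[OF game] show ?thesis by (intro that[of "{}"]) auto
  next
    case 2
    have "{i} \<union> ?M = {1..n}" using i by auto
    with 2 show ?thesis
      using simple_game_grand_coalition[OF game] by (intro that[of "{i}"]) auto
  next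
    case 3
    have "v S = 0 \<and> v (insert i S) = 1" if "S \<subseteq> ?M" for S
    proof -
      have "insert i S \<subseteq> {1..n}" using that i by auto
      then show ?thesis
        using that 3 binary[of "insert i S"]
          simple_game_mono[OF game, of S ?M] simple_game_mono[OF game, of "{i}" "insert i S"]
        by auto
    qed
    then have "dictator n v i"
      by (intro dictatorI_swings) (auto simp: swings_def)
    with assms(3) show ?thesis by blast
  qed
qed

lemma sum_card_swings_others_ge:
  assumes game: "simple_game n v" and i: "i \<in> {1..n}" and "\<not> dictator n v i"
  shows "n - 1 \<le> (\<Sum>j\<in>{1..n} - {i}. card (swings {1..n} v j))"
proof -
  let ?M = "{1..n} - {i}"
  obtain L where L: "L \<subseteq> {i}" "v L = 0" "v (L \<union> ?M) = 1"
    using losing_coalition_completed_by_others[OF assms] by blast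
  have "L \<inter> ?M = {}" "L \<union> ?M \<subseteq> {1..n}"
    using L(1) i by auto
  with simple_game_values[OF game] have "card ?M \<le> (\<Sum>j\<in>?M. card (swings {1..n} v j))"
    by (rule sum_card_swings_ge[OF finite_atLeastAtMost _ _ _ L(2,3)])
  with i show ?thesis
    by simp
qed

lemma BZI_eq_card_swings:
  assumes game: "simple_game n v" and i: "i \<in> {1..n}"
  defines "a \<equiv> card (swings {1..n} v i)"
    and "b \<equiv> \<Sum>j\<in>{1..n} - {i}. card (swings {1..n} v j)"
  shows "BZI n v i = real a / (real a + real b)"
proof -
  have "(\<Sum>j\<in>{1..n}. swing_count n v j)
      = swing_count n v i + (\<Sum>j\<in>{1..n} - {i}. swing_count n v j)"
    using i by (rule sum.remove[OF finite_atLeastAtMost])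
  also have "(\<Sum>j\<in>{1..n} - {i}. swing_count n v j) = int b"
    unfolding b_def of_nat_sum by (rule sum.cong) (auto simp: swing_count_eq_card_swings[OF game])
  finally show ?thesis
    by (simp add: BZI_def swing_count_eq_card_swings[OF assms(1,2)] a_def)
qed

lemma frac_le_frac_mono:
  fixes a b A B :: "'a :: linordered_field"
  assumes "0 \<le> a" "a \<le> A" "0 < B" "B \<le> b"
  shows "a / (a + b) \<le> A / (A + B)"
proof -
  have "a * B \<le> A * b"
    using assms by (intro mult_mono) auto
  then show ?thesis
    using assms by (simp add: divide_simps) (simp add: algebra_simps)
qed

theorem theorem2:
  fixes n :: nat and v :: "nat set \<Rightarrow> nat" and i :: nat
  assumes "n \<ge> 2"
    and "simple_game n v"
    and "i \<in> {1..n}"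
    and "\<not> dictator n v i"
  shows "BZI n v i \<le> (2 ^ (n - 1) - 1) / (2 ^ (n - 1) + real n - 2)"
proof -
  define a where "a = card (swings {1..n} v i)"
  define b where "b = (\<Sum>j\<in>{1..n} - {i}. card (swings {1..n} v j))"
  have "a < 2 ^ (n - 1)"
    unfolding a_def using assms(3,4) by (rule card_swings_less_if_not_dictator)
  then have "real (Suc a) \<le> 2 ^ (n - 1)"
    by (metis Suc_leI of_nat_le_iff of_nat_numeral of_nat_power)
  then have a_le: "real a \<le> 2 ^ (n - 1) - 1"
    by simp
  have "n - 1 \<le> b"
    unfolding b_def using assms(2-4) by (rule sum_card_swings_others_ge)
  then have b_ge: "real n - 1 \<le> real b"
    using assms(1) by linarith
  have "BZI n v i = real a / (real a + real b)"
    unfolding a_def b_def using assms(2,3) by (rule BZI_eq_card_swings)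
  also have "\<dots> \<le> (2 ^ (n - 1) - 1) / ((2 ^ (n - 1) - 1) + (real n - 1))"
    using a_le b_ge assms(1) by (intro frac_le_frac_mono) auto
  also have "(2 ^ (n - 1) - 1) + (real n - 1) = 2 ^ (n - 1) + real n - 2"
    by simp
  finally show ?thesis .
qed

end
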